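(* Let $\overline D\subseteq\mathbb F_q^n$, let $D\subseteq\mathcal O^n$ be its preimage under reduction mod $\pi$, and let $f\in\mathcal O[x]$ have no critical points in $D$. Let $g\in\mathcal O[x]$, let $\beta$ be an integer with $\beta>2c(f,D)+1$, and put $F(x)=f(x)+\pi^\beta g(x)$. Then $$\int_D|f(x)|^s|dx|=\int_D|F(x)|^s|dx|.$$
   Context: $K$ is a $p$-adic field with ring of integers $\mathcal O$, uniformizer $\pi$, residue field $\mathbb F_q$, valuation $v$, $|\xi|=q^{-v(\xi)}$, normalized Haar measure $|dx|$. A critical point of $f$ in $D$ is $P\in D$ with $\partial f/\partial x_i(P)=0$ for all $i$. For $P$ not critical, $\ell(f,P)=\min_i v(\partial f/\partial x_i(P))$, and $c(f,D)=\sup_{P\in D}\ell(f,P)$ (finite when $f$ has no critical points in the compact set $D$). *)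

theory Defs
  imports "HOL-Analysis.Analysis"
begin

text \<open>The valuation v is only meaningful on nonzero elements; v(0) = infinity is
encoded by the predicate vge below.\<close>

definition vge :: "('a::field \<Rightarrow> int) \<Rightarrow> 'a \<Rightarrow> int \<Rightarrow> bool" where
  "vge v x k \<longleftrightarrow> x = 0 \<or> v x \<ge> k"

definition ring_int :: "('a::field \<Rightarrow> int) \<Rightarrow> 'a set" where
  "ring_int v = {x. vge v x 0}"

text \<open>K is a p-adic field (a finite extension of Q_p): a field of characteristic 0,
complete for a discrete valuation v normalised by v(pi) = 1 (pi a uniformizer),
with finite residue field O / pi O of cardinality q.\<close>

definition is_padic_field :: "('a::field_char_0 \<Rightarrow> int) \<Rightarrow> 'a \<Rightarrow> nat \<Rightarrow> bool" where
  "is_padic_field v \<pi> q \<longleftrightarrow>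
     (\<forall>x y. x \<noteq> 0 \<longrightarrow> y \<noteq> 0 \<longrightarrow> v (x * y) = v x + v y) \<and>
     (\<forall>x y. x \<noteq> 0 \<longrightarrow> y \<noteq> 0 \<longrightarrow> x + y \<noteq> 0 \<longrightarrow> v (x + y) \<ge> min (v x) (v y)) \<and>
     \<pi> \<noteq> 0 \<and> v \<pi> = 1 \<and>
     (\<exists>R. finite R \<and> card R = q \<and> R \<subseteq> ring_int v \<and>
          (\<forall>x\<in>ring_int v. \<exists>!r. r \<in> R \<and> vge v (x - r) 1)) \<and>
     (\<forall>s :: nat \<Rightarrow> 'a.
        (\<forall>k. \<exists>N. \<forall>m\<ge>N. \<forall>n\<ge>N. vge v (s m - s n) k) \<longrightarrow>
        (\<exists>L. \<forall>k. \<exists>N. \<forall>m\<ge>N. vge v (s m - L) k))"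

text \<open>Normalised absolute value |x| = q^(-v(x)), |0| = 0, and |x|^s for complex s
(with 0^s = 0).\<close>

definition absK :: "('a::field \<Rightarrow> int) \<Rightarrow> nat \<Rightarrow> 'a \<Rightarrow> real" where
  "absK v q x = (if x = 0 then 0 else real q powr (- real_of_int (v x)))"

definition abs_pow :: "('a::field \<Rightarrow> int) \<Rightarrow> nat \<Rightarrow> 'a \<Rightarrow> complex \<Rightarrow> complex" where
  "abs_pow v q x s = complex_of_real (absK v q x) powr s"

section \<open>Polynomials in n variables (n = CARD('n)), as finitely supported coefficient maps\<close>

definition is_poly_over :: "'a set \<Rightarrow> (('n::finite \<Rightarrow> nat) \<Rightarrow> 'a::field) \<Rightarrow> bool" where
  "is_poly_over A c \<longleftrightarrow> finite {\<alpha>. c \<alpha> \<noteq> 0} \<and> (\<forall>\<alpha>. c \<alpha> \<in> A)"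

definition mpoly_eval :: "(('n::finite \<Rightarrow> nat) \<Rightarrow> 'a::field) \<Rightarrow> ('n \<Rightarrow> 'a) \<Rightarrow> 'a" where
  "mpoly_eval c x = (\<Sum>\<alpha>\<in>{\<alpha>. c \<alpha> \<noteq> 0}. c \<alpha> * (\<Prod>i\<in>UNIV. x i ^ \<alpha> i))"

definition mpoly_pd :: "'n \<Rightarrow> (('n::finite \<Rightarrow> nat) \<Rightarrow> 'a::field) \<Rightarrow> ('n \<Rightarrow> nat) \<Rightarrow> 'a" where
  "mpoly_pd i c = (\<lambda>\<alpha>. of_nat (\<alpha> i + 1) * c (\<alpha>(i := \<alpha> i + 1)))"

definition critical_point :: "(('n::finite \<Rightarrow> nat) \<Rightarrow> 'a::field) \<Rightarrow> ('n \<Rightarrow> 'a) \<Rightarrow> bool" where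
  "critical_point f P \<longleftrightarrow> (\<forall>i. mpoly_eval (mpoly_pd i f) P = 0)"

definition ell :: "('a::field \<Rightarrow> int) \<Rightarrow> (('n::finite \<Rightarrow> nat) \<Rightarrow> 'a) \<Rightarrow> ('n \<Rightarrow> 'a) \<Rightarrow> int" where
  "ell v f P = Min {v (mpoly_eval (mpoly_pd i f) P) | i. mpoly_eval (mpoly_pd i f) P \<noteq> 0}"

definition cfD :: "('a::field \<Rightarrow> int) \<Rightarrow> (('n::finite \<Rightarrow> nat) \<Rightarrow> 'a) \<Rightarrow> ('n \<Rightarrow> 'a) set \<Rightarrow> ereal" where
  "cfD v f D = (SUP P\<in>D. ereal (real_of_int (ell v f P)))"

definition On :: "('a::field \<Rightarrow> int) \<Rightarrow> ('n \<Rightarrow> 'a) set" where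
  "On v = {x. \<forall>i. x i \<in> ring_int v}"

definition vball :: "('a::field \<Rightarrow> int) \<Rightarrow> ('n \<Rightarrow> 'a) \<Rightarrow> int \<Rightarrow> ('n \<Rightarrow> 'a) set" where
  "vball v a k = {x. \<forall>i. vge v (x i - a i) k}"

text \<open>D is the preimage under reduction mod pi (O^n -> F_q^n) of some subset of F_q^n,
i.e. D is a union of residue classes a + pi O^n with a in O^n.\<close>
definition residue_preimage :: "('a::field \<Rightarrow> int) \<Rightarrow> ('n \<Rightarrow> 'a) set \<Rightarrow> bool" where
  "residue_preimage v D \<longleftrightarrow> D \<subseteq> On v \<and> (\<forall>a\<in>D. vball v a 1 \<subseteq> D)"

text \<open>The normalised Haar measure on O^n: Borel sets (generated by the balls),
with measure(a + pi^k O^n) = q^(-k n) for a in O^n, k >= 0 (this determines it).\<close>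
definition is_haar_On :: "('a::field \<Rightarrow> int) \<Rightarrow> nat \<Rightarrow> ('n::finite \<Rightarrow> 'a) measure \<Rightarrow> bool" where
  "is_haar_On v q M \<longleftrightarrow>
     space M = On v \<and>
     sets M = sigma_sets (On v) {vball v a k | a k. a \<in> On v \<and> k \<ge> 0} \<and>
     (\<forall>a\<in>On v. \<forall>k\<ge>0. emeasure M (vball v a k) =
         ennreal (real q powr (- real_of_int (k * int CARD('n)))))"

end

theory Submission
  imports Defs
begin

text \<open>Both integrals are power series in q^(-s) whose coefficients are the measures of the level
sets {x \<in> D. v(h x) \<ge> k}. Since F \<equiv> f mod \<pi>^\<beta>, the level sets of f and F agree for k \<le> \<beta>.
For k \<ge> \<beta> > 2 c(f,D) + 1 a measure-theoretic Hensel lemma shows that passing from k to k + 1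
divides the measure by q, for f as well as for F: the level set is a disjoint union of balls
a + \<pi>^(k - l) O^n on which the gradient keeps its minimal valuation l, and on each such ball the
condition v(h) \<ge> k + 1 is a nondegenerate linear congruence on the next \<pi>-adic digit, satisfied
by q^(n-1) of the q^n subballs. The gradient of F differs from that of f by \<pi>^\<beta> times an integral
vector, too little to change its minimal valuation, so both sequences of measures coincide.\<close>

section \<open>Valuations and residue systems\<close>

definition residue_system :: "('a::field \<Rightarrow> int) \<Rightarrow> nat \<Rightarrow> 'a set \<Rightarrow> bool" where
  "residue_system v q R \<longleftrightarrow> finite R \<and> card R = q \<and> (\<forall>r\<in>R. vge v r 0) \<and>
     (\<forall>y. vge v y 0 \<longrightarrow> (\<exists>r\<in>R. vge v (y - r) 1)) \<and>
     (\<forall>r\<in>R. \<forall>r'\<in>R. vge v (r - r') 1 \<longrightarrow> r = r')"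

definition min_valuation :: "('a::field \<Rightarrow> int) \<Rightarrow> ('i \<Rightarrow> 'a) \<Rightarrow> int \<Rightarrow> bool" where
  "min_valuation v d l \<longleftrightarrow> (\<forall>i. vge v (d i) l) \<and> (\<exists>i. d i \<noteq> 0 \<and> v (d i) = l)"

lemma min_valuation_unique: "min_valuation v d l1 \<Longrightarrow> min_valuation v d l2 \<Longrightarrow> l1 = l2"
  unfolding min_valuation_def vge_def by (metis order.antisym)

lemma min_valuation_nonneg: "(\<And>i. vge v (d i) 0) \<Longrightarrow> min_valuation v d l \<Longrightarrow> 0 \<le> l"
  unfolding min_valuation_def vge_def by metis

locale padic_field =
  fixes v :: "'a::field_char_0 \<Rightarrow> int" and \<pi> :: 'a and q :: nat
  assumes padic: "is_padic_field v \<pi> q"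
begin

lemma v_mult: "x \<noteq> 0 \<Longrightarrow> y \<noteq> 0 \<Longrightarrow> v (x * y) = v x + v y"
  using padic unfolding is_padic_field_def by blast

lemma v_add_ge_min: "x \<noteq> 0 \<Longrightarrow> y \<noteq> 0 \<Longrightarrow> x + y \<noteq> 0 \<Longrightarrow> min (v x) (v y) \<le> v (x + y)"
  using padic unfolding is_padic_field_def by blast

lemma pi_nonzero: "\<pi> \<noteq> 0" and v_pi: "v \<pi> = 1"
  using padic unfolding is_padic_field_def by blast+

lemma v_one: "v 1 = 0"
  using v_mult[of 1 1] by simp

lemma v_uminus: "v (- x) = v x"
proof (cases "x = 0")
  case False
  have "v (- 1) = 0" using v_mult[of "- 1" "- 1"] v_one by simp
  then show ?thesis using v_mult[of "- 1" x] False by simp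
qed simp

lemma v_inverse: "x \<noteq> 0 \<Longrightarrow> v (inverse x) = - v x"
  using v_mult[of x "inverse x"] v_one by simp

lemma vge_zero [simp]: "vge v 0 k"
  by (simp add: vge_def)

lemma vge_one: "vge v 1 0"
  by (simp add: vge_def v_one)

lemma vge_mono: "vge v x k \<Longrightarrow> l \<le> k \<Longrightarrow> vge v x l"
  by (auto simp: vge_def)

lemma vge_add: "vge v x k \<Longrightarrow> vge v y k \<Longrightarrow> vge v (x + y) k"
  unfolding vge_def by (metis add.commute add_0 dual_order.trans min.bounded_iff v_add_ge_min)

lemma vge_uminus_iff: "vge v (- x) k \<longleftrightarrow> vge v x k"
  by (simp add: vge_def v_uminus)

lemma vge_diff: "vge v x k \<Longrightarrow> vge v y k \<Longrightarrow> vge v (x - y) k"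
  using vge_add[of x k "- y"] vge_uminus_iff by simp

lemma vge_diff_commute: "vge v (x - y) k \<longleftrightarrow> vge v (y - x) k"
  by (metis minus_diff_eq vge_uminus_iff)

lemma vge_mult: "vge v x k \<Longrightarrow> vge v y l \<Longrightarrow> vge v (x * y) (k + l)"
  by (cases "x = 0 \<or> y = 0") (auto simp: vge_def v_mult)

lemma vge_mult_le: "vge v x k \<Longrightarrow> vge v y l \<Longrightarrow> j \<le> k + l \<Longrightarrow> vge v (x * y) j"
  using vge_mult vge_mono by blast

lemma vge_sum: "(\<And>i. i \<in> S \<Longrightarrow> vge v (f i) k) \<Longrightarrow> vge v (sum f S) k"
  by (induction S rule: infinite_finite_induct) (auto intro: vge_add)

lemma vge_unit_mult_iff: "u \<noteq> 0 \<Longrightarrow> v u = 0 \<Longrightarrow> vge v (u * y) k \<longleftrightarrow> vge v y k"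
  by (cases "y = 0") (auto simp: vge_def v_mult)

lemma vge_inverse_unit: "u \<noteq> 0 \<Longrightarrow> v u = 0 \<Longrightarrow> vge v (inverse u) 0"
  by (simp add: vge_def v_inverse)

lemma pi_powi_nonzero: "\<pi> powi k \<noteq> 0"
  using pi_nonzero by simp

lemma v_pi_powi: "v (\<pi> powi k) = k"
proof -
  have power: "v (\<pi> ^ n) = int n" for n
    by (induction n) (auto simp: v_one v_mult pi_nonzero v_pi)
  show ?thesis
  proof (cases "0 \<le> k")
    case True
    then show ?thesis using power[of "nat k"] by (simp add: power_int_def)
  next
    case False
    then have "\<pi> \<noteq> 0" "\<pi> powi k = inverse (\<pi> ^ nat (- k))"
      using pi_nonzero by (simp_all add: power_int_def power_inverse)
    then show ?thesis using power[of "nat (- k)"] False by (simp add: v_inverse)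
  qed
qed

lemma vge_pi_powi_mult_iff: "vge v (\<pi> powi k * y) j \<longleftrightarrow> vge v y (j - k)"
proof (cases "y = 0")
  case False
  then have "\<pi> powi k * y \<noteq> 0" "v (\<pi> powi k * y) = k + v y"
    using v_mult[OF pi_powi_nonzero False] v_pi_powi pi_powi_nonzero by simp_all
  then show ?thesis using False unfolding vge_def by auto
qed simp

lemma vge_pi_powi: "j \<le> k \<Longrightarrow> vge v (\<pi> powi k) j"
  by (simp add: vge_def v_pi_powi)

lemma vge_divide_pi_powi: "vge v x j \<Longrightarrow> vge v (x / \<pi> powi k) (j - k)"
  by (metis vge_pi_powi_mult_iff pi_powi_nonzero nonzero_mult_div_cancel_left times_divide_eq_right)

lemma residue_system_exists:
  obtains R where "residue_system v q R"
proof -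
  obtain R where R: "finite R" "card R = q" "R \<subseteq> ring_int v"
      "\<forall>x\<in>ring_int v. \<exists>!r. r \<in> R \<and> vge v (x - r) 1"
    using padic unfolding is_padic_field_def by blast
  have "r = r'" if "r \<in> R" "r' \<in> R" "vge v (r - r') 1" for r r'
  proof -
    have "vge v (r - r) 1" by simp
    then show ?thesis using that R(3,4) by blast
  qed
  moreover have "\<forall>r\<in>R. vge v r 0" "\<forall>y. vge v y 0 \<longrightarrow> (\<exists>r\<in>R. vge v (y - r) 1)"
    using R(3,4) by (auto simp: ring_int_def)
  ultimately show ?thesis using R(1,2) that unfolding residue_system_def by blast
qed

lemma two_le_q: "2 \<le> q"
proof -
  obtain R where R: "residue_system v q R" by (rule residue_system_exists)
  have rep: "\<exists>r\<in>R. vge v (y - r) 1" if "vge v y 0" for y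
    using R that by (simp add: residue_system_def)
  obtain r0 where r0: "r0 \<in> R" "vge v (0 - r0) 1" using rep[OF vge_zero] by blast
  obtain r1 where r1: "r1 \<in> R" "vge v (1 - r1) 1" using rep[OF vge_one] by blast
  have "r0 \<noteq> r1"
  proof
    assume "r0 = r1"
    then have "vge v ((1 - r1) - (0 - r0)) 1" using r0 r1 vge_diff by blast
    then show False using \<open>r0 = r1\<close> by (simp add: vge_def v_one)
  qed
  then have "card {r0, r1} \<le> card R"
    using r0 r1 R by (intro card_mono) (auto simp: residue_system_def)
  then show ?thesis using \<open>r0 \<noteq> r1\<close> R by (simp add: residue_system_def)
qed

lemma min_valuation_add:
  assumes d: "min_valuation v d l" and e: "\<And>i. vge v (e i) (l + 1)"
  shows "min_valuation v (\<lambda>i. d i + e i) l"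
proof -
  have ge: "vge v (d j + e j) l" for j
    using d vge_mono[OF e[of j]] by (auto simp: min_valuation_def intro: vge_add)
  obtain i where i: "d i \<noteq> 0" "v (d i) = l"
    using d by (auto simp: min_valuation_def)
  have "d i + e i \<noteq> 0 \<and> v (d i + e i) = l"
  proof (rule ccontr)
    assume "\<not> (d i + e i \<noteq> 0 \<and> v (d i + e i) = l)"
    then have "vge v (d i + e i) (l + 1)" using ge[of i] by (auto simp: vge_def)
    then have "vge v ((d i + e i) - e i) (l + 1)" using e by (rule vge_diff)
    then show False using i by (simp add: vge_def)
  qed
  then show ?thesis using ge by (auto simp: min_valuation_def)
qed

lemma min_valuation_divide_pi_powi:
  assumes d: "min_valuation v d l"
  shows "min_valuation v (\<lambda>i. d i / \<pi> powi l) 0"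
proof -
  obtain i where i: "d i \<noteq> 0" "v (d i) = l"
    using d by (auto simp: min_valuation_def)
  have "v (d i / \<pi> powi l) = 0"
    using v_mult[of "d i" "inverse (\<pi> powi l)"] i pi_powi_nonzero[of l]
    by (simp add: divide_inverse v_inverse v_pi_powi)
  moreover have "vge v (d j / \<pi> powi l) 0" for j
    using vge_divide_pi_powi[of "d j" l l] d by (simp add: min_valuation_def)
  ultimately show ?thesis
    using i(1) pi_powi_nonzero[of l] by (auto simp: min_valuation_def)
qed

lemma abs_pow_eq_power:
  assumes "y \<noteq> 0" "v y = int n"
  shows "abs_pow v q y s = exp (- s * complex_of_real (ln (real q))) ^ n"
proof -
  have q: "0 < real q" using two_le_q by simp
  have "abs_pow v q y s = complex_of_real (real q powr (- real n)) powr s"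
    using assms by (simp add: abs_pow_def absK_def)
  also have "\<dots> = exp (s * complex_of_real (ln (real q powr (- real n))))"
    using q by (simp add: powr_def Ln_of_real)
  also have "\<dots> = exp (of_nat n * (- s * complex_of_real (ln (real q))))"
    using q by (simp add: ln_powr algebra_simps)
  also have "\<dots> = exp (- s * complex_of_real (ln (real q))) ^ n"
    by (rule exp_of_nat_mult)
  finally show ?thesis .
qed

end

section \<open>Functions with an integral Taylor expansion\<close>

text \<open>The properties of polynomials over O (and of f + \<pi>^\<beta> g) that the argument uses.\<close>

definition integral_taylor ::
  "('a::field \<Rightarrow> int) \<Rightarrow> (('n::finite \<Rightarrow> 'a) \<Rightarrow> 'a) \<Rightarrow> ('n \<Rightarrow> ('n \<Rightarrow> 'a) \<Rightarrow> 'a) \<Rightarrow> bool" where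
  "integral_taylor v h dh \<longleftrightarrow>
     (\<forall>a\<in>On v. vge v (h a) 0 \<and> (\<forall>i. vge v (dh i a) 0)) \<and>
     (\<forall>a b m. a \<in> On v \<longrightarrow> b \<in> On v \<longrightarrow> 0 \<le> m \<longrightarrow> (\<forall>i. vge v (b i - a i) m) \<longrightarrow>
        vge v (h b - h a - (\<Sum>i\<in>UNIV. dh i a * (b i - a i))) (2 * m) \<and>
        (\<forall>i. vge v (dh i b - dh i a) m))"

context padic_field
begin

lemma On_vge: "x \<in> On v \<Longrightarrow> vge v (x i) 0"
  by (simp add: On_def ring_int_def)

lemma integral_taylor_vge_value: "integral_taylor v h dh \<Longrightarrow> a \<in> On v \<Longrightarrow> vge v (h a) 0"
  and integral_taylor_vge_grad: "integral_taylor v h dh \<Longrightarrow> a \<in> On v \<Longrightarrow> vge v (dh i a) 0"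
  by (auto simp: integral_taylor_def)

lemma integral_taylor_remainder:
  "integral_taylor v h dh \<Longrightarrow> a \<in> On v \<Longrightarrow> b \<in> On v \<Longrightarrow> 0 \<le> m \<Longrightarrow> (\<And>i. vge v (b i - a i) m) \<Longrightarrow>
     vge v (h b - h a - (\<Sum>i\<in>UNIV. dh i a * (b i - a i))) (2 * m)"
  and integral_taylor_grad_diff:
  "integral_taylor v h dh \<Longrightarrow> a \<in> On v \<Longrightarrow> b \<in> On v \<Longrightarrow> 0 \<le> m \<Longrightarrow> (\<And>i. vge v (b i - a i) m) \<Longrightarrow>
     vge v (dh i b - dh i a) m"
  by (auto simp: integral_taylor_def)

lemma integral_taylor_linear_term:
  "integral_taylor v h dh \<Longrightarrow> a \<in> On v \<Longrightarrow> (\<And>i. vge v (b i - a i) m) \<Longrightarrow>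
    vge v (\<Sum>i\<in>UNIV. dh i a * (b i - a i)) m"
  by (intro vge_sum) (auto intro: vge_mult_le[of _ 0 _ m] integral_taylor_vge_grad)

lemma integral_taylor_diff:
  assumes h: "integral_taylor v h dh" and a: "a \<in> On v" and b: "b \<in> On v" and m: "0 \<le> m"
    and ab: "\<And>i. vge v (b i - a i) m"
  shows "vge v (h b - h a) m"
proof -
  have "vge v (h b - h a - (\<Sum>i\<in>UNIV. dh i a * (b i - a i))) m"
    using integral_taylor_remainder[OF h a b m ab] m vge_mono by fastforce
  then have "vge v ((h b - h a - (\<Sum>i\<in>UNIV. dh i a * (b i - a i))) + (\<Sum>i\<in>UNIV. dh i a * (b i - a i))) m"
    using integral_taylor_linear_term[OF h a ab] by (rule vge_add)
  then show ?thesis by simp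
qed

lemma integral_taylor_cong: "integral_taylor v h dh \<Longrightarrow> (\<And>i x. dh' i x = dh i x) \<Longrightarrow> integral_taylor v h dh'"
  by (metis ext)

lemma integral_taylor_const: "vge v c 0 \<Longrightarrow> integral_taylor v (\<lambda>x. c) (\<lambda>i x. 0)"
  by (simp add: integral_taylor_def)

lemma integral_taylor_coord:
  "integral_taylor v (\<lambda>x::'n::finite \<Rightarrow> 'a. x j) (\<lambda>i x. if i = j then 1 else 0)"
proof -
  have "(\<Sum>i\<in>UNIV. (if i = j then 1 else 0) * (b i - a i)) = b j - a j" for a b :: "'n \<Rightarrow> 'a"
  proof -
    have "(\<Sum>i\<in>UNIV. (if i = j then 1 else 0) * (b i - a i)) = (\<Sum>i\<in>UNIV. if i = j then b i - a i else 0)"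
      by (intro sum.cong) auto
    then show ?thesis by simp
  qed
  then show ?thesis by (auto simp: integral_taylor_def On_vge vge_one)
qed

lemma integral_taylor_add:
  fixes h1 :: "('n::finite \<Rightarrow> 'a) \<Rightarrow> 'a"
  assumes h1: "integral_taylor v h1 d1" and h2: "integral_taylor v h2 d2"
  shows "integral_taylor v (\<lambda>x. h1 x + h2 x) (\<lambda>i x. d1 i x + d2 i x)"
  unfolding integral_taylor_def
proof (intro conjI ballI allI impI)
  fix a :: "'n \<Rightarrow> 'a" and i assume a: "a \<in> On v"
  show "vge v (h1 a + h2 a) 0" "vge v (d1 i a + d2 i a) 0"
    using integral_taylor_vge_value[OF h1 a] integral_taylor_vge_value[OF h2 a]
      integral_taylor_vge_grad[OF h1 a] integral_taylor_vge_grad[OF h2 a]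
    by (auto intro: vge_add)
next
  fix a b :: "'n \<Rightarrow> 'a" and m :: int and i
  assume a: "a \<in> On v" and b: "b \<in> On v" and m: "0 \<le> m" and "\<forall>i. vge v (b i - a i) m"
  then have ab: "\<And>i. vge v (b i - a i) m" by blast
  have "h1 b + h2 b - (h1 a + h2 a) - (\<Sum>i\<in>UNIV. (d1 i a + d2 i a) * (b i - a i)) =
      (h1 b - h1 a - (\<Sum>i\<in>UNIV. d1 i a * (b i - a i))) + (h2 b - h2 a - (\<Sum>i\<in>UNIV. d2 i a * (b i - a i)))"
    by (simp add: distrib_right sum.distrib)
  then show "vge v (h1 b + h2 b - (h1 a + h2 a) - (\<Sum>i\<in>UNIV. (d1 i a + d2 i a) * (b i - a i))) (2 * m)"
    using vge_add[OF integral_taylor_remainder[OF h1 a b m ab] integral_taylor_remainder[OF h2 a b m ab]]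
    by (simp only:)
  have "d1 i b + d2 i b - (d1 i a + d2 i a) = (d1 i b - d1 i a) + (d2 i b - d2 i a)" by simp
  then show "vge v (d1 i b + d2 i b - (d1 i a + d2 i a)) m"
    using vge_add[OF integral_taylor_grad_diff[OF h1 a b m ab, of i] integral_taylor_grad_diff[OF h2 a b m ab, of i]]
    by (simp only:)
qed

text \<open>Product rule: the remainder of h1 h2 is a combination of the remainders of h1 and h2 and of
the product of two first-order increments.\<close>

lemma integral_taylor_mult_remainder:
  fixes h1 :: "('n::finite \<Rightarrow> 'a) \<Rightarrow> 'a"
  assumes h1: "integral_taylor v h1 d1" and h2: "integral_taylor v h2 d2"
    and a: "a \<in> On v" and b: "b \<in> On v" and m: "0 \<le> m" and ab: "\<And>i. vge v (b i - a i) m"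
  shows "vge v (h1 b * h2 b - h1 a * h2 a -
    (\<Sum>i\<in>UNIV. (d1 i a * h2 a + h1 a * d2 i a) * (b i - a i))) (2 * m)"
proof -
  define L1 where "L1 = (\<Sum>i\<in>UNIV. d1 i a * (b i - a i))"
  define L2 where "L2 = (\<Sum>i\<in>UNIV. d2 i a * (b i - a i))"
  have lin: "(\<Sum>i\<in>UNIV. (d1 i a * h2 a + h1 a * d2 i a) * (b i - a i)) = L1 * h2 a + h1 a * L2"
  proof -
    have "(d1 i a * h2 a + h1 a * d2 i a) * (b i - a i) =
        d1 i a * (b i - a i) * h2 a + h1 a * (d2 i a * (b i - a i))" for i
      by (simp add: algebra_simps)
    then show ?thesis unfolding L1_def L2_def
      by (simp only: sum.distrib sum_distrib_left sum_distrib_right)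
  qed
  have split: "h1 b * h2 b - h1 a * h2 a - (L1 * h2 a + h1 a * L2) =
      (h1 b - h1 a - L1) * h2 b + h1 a * (h2 b - h2 a - L2) + L1 * (h2 b - h2 a)"
    by (simp add: algebra_simps)
  have "vge v ((h1 b - h1 a - L1) * h2 b) (2 * m)"
    using vge_mult_le[OF integral_taylor_remainder[OF h1 a b m ab] integral_taylor_vge_value[OF h2 b]]
    unfolding L1_def by simp
  moreover have "vge v (h1 a * (h2 b - h2 a - L2)) (2 * m)"
    using vge_mult_le[OF integral_taylor_vge_value[OF h1 a] integral_taylor_remainder[OF h2 a b m ab]]
    unfolding L2_def by simp
  moreover have "vge v (L1 * (h2 b - h2 a)) (2 * m)"
    using vge_mult_le[OF integral_taylor_linear_term[OF h1 a ab] integral_taylor_diff[OF h2 a b m ab]]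
    unfolding L1_def by simp
  ultimately show ?thesis unfolding lin split by (intro vge_add)
qed

lemma integral_taylor_mult_grad_diff:
  fixes h1 :: "('n::finite \<Rightarrow> 'a) \<Rightarrow> 'a"
  assumes h1: "integral_taylor v h1 d1" and h2: "integral_taylor v h2 d2"
    and a: "a \<in> On v" and b: "b \<in> On v" and m: "0 \<le> m" and ab: "\<And>i. vge v (b i - a i) m"
  shows "vge v (d1 i b * h2 b + h1 b * d2 i b - (d1 i a * h2 a + h1 a * d2 i a)) m"
proof -
  have split: "d1 i b * h2 b + h1 b * d2 i b - (d1 i a * h2 a + h1 a * d2 i a) =
      (d1 i b - d1 i a) * h2 b + d1 i a * (h2 b - h2 a) + ((h1 b - h1 a) * d2 i b + h1 a * (d2 i b - d2 i a))"
    by (simp add: algebra_simps)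
  have "vge v ((d1 i b - d1 i a) * h2 b) m"
    using vge_mult_le[OF integral_taylor_grad_diff[OF h1 a b m ab] integral_taylor_vge_value[OF h2 b]]
    by simp
  moreover have "vge v (d1 i a * (h2 b - h2 a)) m"
    using vge_mult_le[OF integral_taylor_vge_grad[OF h1 a] integral_taylor_diff[OF h2 a b m ab]] by simp
  moreover have "vge v ((h1 b - h1 a) * d2 i b) m"
    using vge_mult_le[OF integral_taylor_diff[OF h1 a b m ab] integral_taylor_vge_grad[OF h2 b]] by simp
  moreover have "vge v (h1 a * (d2 i b - d2 i a)) m"
    using vge_mult_le[OF integral_taylor_vge_value[OF h1 a] integral_taylor_grad_diff[OF h2 a b m ab]]
    by simp
  ultimately show ?thesis unfolding split by (intro vge_add)
qed

lemma integral_taylor_mult: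
  fixes h1 :: "('n::finite \<Rightarrow> 'a) \<Rightarrow> 'a"
  assumes h1: "integral_taylor v h1 d1" and h2: "integral_taylor v h2 d2"
  shows "integral_taylor v (\<lambda>x. h1 x * h2 x) (\<lambda>i x. d1 i x * h2 x + h1 x * d2 i x)"
  unfolding integral_taylor_def
proof (intro conjI ballI allI impI)
  fix a :: "'n \<Rightarrow> 'a" and i assume a: "a \<in> On v"
  show "vge v (h1 a * h2 a) 0" "vge v (d1 i a * h2 a + h1 a * d2 i a) 0"
    using integral_taylor_vge_value[OF h1 a] integral_taylor_vge_value[OF h2 a]
      integral_taylor_vge_grad[OF h1 a, of i] integral_taylor_vge_grad[OF h2 a, of i]
    by (auto intro!: vge_add vge_mult_le)
qed (use integral_taylor_mult_remainder[OF h1 h2] integral_taylor_mult_grad_diff[OF h1 h2] in blast)+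

lemma integral_taylor_sum:
  "(\<And>\<alpha>. \<alpha> \<in> S \<Longrightarrow> integral_taylor v (h \<alpha>) (d \<alpha>)) \<Longrightarrow>
    integral_taylor v (\<lambda>x. \<Sum>\<alpha>\<in>S. h \<alpha> x) (\<lambda>i x. \<Sum>\<alpha>\<in>S. d \<alpha> i x)"
proof (induction S rule: infinite_finite_induct)
  case (insert \<alpha> S)
  then show ?case
    using integral_taylor_add[of "h \<alpha>" "d \<alpha>" "\<lambda>x. \<Sum>\<alpha>\<in>S. h \<alpha> x" "\<lambda>i x. \<Sum>\<alpha>\<in>S. d \<alpha> i x"] by simp
qed (use integral_taylor_const[of 0] in simp_all)

lemma integral_taylor_coord_power:
  "integral_taylor v (\<lambda>x::'n::finite \<Rightarrow> 'a. x j ^ n)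
     (\<lambda>i x. if i = j then of_nat n * x j ^ (n - 1) else 0)"
proof (induction n)
  case 0
  show ?case using integral_taylor_const[OF vge_one] by (auto intro: integral_taylor_cong)
next
  case (Suc n)
  have "(if i = j then of_nat (Suc n) * x j ^ (Suc n - 1) else 0) =
      (if i = j then 1 else 0) * x j ^ n + x j * (if i = j then of_nat n * x j ^ (n - 1) else 0)"
    for i and x :: "'n \<Rightarrow> 'a"
    by (cases n) (auto simp: algebra_simps)
  then show ?case
    using integral_taylor_cong[OF integral_taylor_mult[OF integral_taylor_coord Suc.IH]] by simp
qed

lemma integral_taylor_monomial_on:
  "integral_taylor v (\<lambda>x::'n::finite \<Rightarrow> 'a. \<Prod>j\<in>S. x j ^ \<alpha> j)
     (\<lambda>i x. if i \<in> S then of_nat (\<alpha> i) * (\<Prod>j\<in>S. x j ^ (\<alpha>(i := \<alpha> i - 1)) j) else 0)"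
proof (induction S rule: finite_induct[OF finite])
  case 1
  show ?case using integral_taylor_const[OF vge_one] by (auto intro: integral_taylor_cong)
next
  case (2 j0 S)
  have "(if i \<in> insert j0 S then of_nat (\<alpha> i) * (\<Prod>j\<in>insert j0 S. x j ^ (\<alpha>(i := \<alpha> i - 1)) j) else 0) =
      (if i = j0 then of_nat (\<alpha> j0) * x j0 ^ (\<alpha> j0 - 1) else 0) * (\<Prod>j\<in>S. x j ^ \<alpha> j) +
      x j0 ^ \<alpha> j0 * (if i \<in> S then of_nat (\<alpha> i) * (\<Prod>j\<in>S. x j ^ (\<alpha>(i := \<alpha> i - 1)) j) else 0)"
    for i and x :: "'n \<Rightarrow> 'a"
  proof (cases "i = j0")
    case True
    have "(\<Prod>j\<in>S. x j ^ (\<alpha>(j0 := \<alpha> j0 - 1)) j) = (\<Prod>j\<in>S. x j ^ \<alpha> j)"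
      using 2(2) by (intro prod.cong) auto
    then show ?thesis using True 2(1,2) by simp
  next
    case False
    then show ?thesis using 2(1,2) by (auto simp: prod.insert)
  qed
  then show ?case
    using integral_taylor_cong[OF integral_taylor_mult[OF integral_taylor_coord_power 2(3)]] 2(1,2)
    by simp
qed

lemma mpoly_eval_pd:
  fixes c :: "('n::finite \<Rightarrow> nat) \<Rightarrow> 'a"
  assumes fin: "finite {\<alpha>. c \<alpha> \<noteq> 0}"
  shows "mpoly_eval (mpoly_pd i c) x =
    (\<Sum>\<alpha>\<in>{\<alpha>. c \<alpha> \<noteq> 0}. c \<alpha> * (of_nat (\<alpha> i) * (\<Prod>j\<in>UNIV. x j ^ (\<alpha>(i := \<alpha> i - 1)) j)))"
proof -
  define raise where "raise \<alpha> = \<alpha>(i := \<alpha> i + 1)" for \<alpha> :: "'n \<Rightarrow> nat"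
  define A where "A = {\<alpha>. mpoly_pd i c \<alpha> \<noteq> 0}"
  define B where "B = {\<alpha>. c \<alpha> \<noteq> 0 \<and> 0 < \<alpha> i}"
  define F where "F \<alpha> = c \<alpha> * (of_nat (\<alpha> i) * (\<Prod>j\<in>UNIV. x j ^ (\<alpha>(i := \<alpha> i - 1)) j))" for \<alpha>
  have inj: "inj_on raise A" unfolding raise_def inj_on_def
    by (metis fun_upd_idem_iff fun_upd_upd add_right_cancel fun_upd_same)
  have A: "A = {\<alpha>. c (raise \<alpha>) \<noteq> 0}" unfolding A_def raise_def mpoly_pd_def
    by (simp del: of_nat_Suc add: of_nat_eq_0_iff)
  have "raise ` A = B"
  proof
    show "raise ` A \<subseteq> B" unfolding A B_def raise_def by auto
    show "B \<subseteq> raise ` A"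
    proof
      fix \<alpha> assume "\<alpha> \<in> B"
      then have "raise (\<alpha>(i := \<alpha> i - 1)) = \<alpha>" "\<alpha>(i := \<alpha> i - 1) \<in> A"
        unfolding A B_def raise_def by auto
      then show "\<alpha> \<in> raise ` A" by force
    qed
  qed
  have "mpoly_eval (mpoly_pd i c) x = (\<Sum>\<alpha>\<in>A. F (raise \<alpha>))"
    unfolding mpoly_eval_def A_def[symmetric]
  proof (intro sum.cong refl)
    fix \<alpha> assume "\<alpha> \<in> A"
    have "(raise \<alpha>)(i := raise \<alpha> i - 1) = \<alpha>" unfolding raise_def by auto
    then show "mpoly_pd i c \<alpha> * (\<Prod>j\<in>UNIV. x j ^ \<alpha> j) = F (raise \<alpha>)"
      unfolding F_def mpoly_pd_def by (simp add: raise_def algebra_simps)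
  qed
  also have "\<dots> = (\<Sum>\<alpha>\<in>B. F \<alpha>)"
    using sum.reindex[OF inj, of F] \<open>raise ` A = B\<close> by simp
  also have "\<dots> = (\<Sum>\<alpha>\<in>{\<alpha>. c \<alpha> \<noteq> 0}. F \<alpha>)"
    using fin by (intro sum.mono_neutral_left) (auto simp: B_def F_def)
  finally show ?thesis unfolding F_def .
qed

lemma integral_taylor_mpoly:
  assumes c: "is_poly_over (ring_int v) c"
  shows "integral_taylor v (mpoly_eval c) (\<lambda>i. mpoly_eval (mpoly_pd i c))"
proof -
  have fin: "finite {\<alpha>. c \<alpha> \<noteq> 0}" and "\<And>\<alpha>. vge v (c \<alpha>) 0"
    using c by (auto simp: is_poly_over_def ring_int_def)
  then have "integral_taylor v (\<lambda>x. \<Sum>\<alpha>\<in>{\<alpha>. c \<alpha> \<noteq> 0}. c \<alpha> * (\<Prod>j\<in>UNIV. x j ^ \<alpha> j))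
     (\<lambda>i x. \<Sum>\<alpha>\<in>{\<alpha>. c \<alpha> \<noteq> 0}. 0 * (\<Prod>j\<in>UNIV. x j ^ \<alpha> j) +
         c \<alpha> * (of_nat (\<alpha> i) * (\<Prod>j\<in>UNIV. x j ^ (\<alpha>(i := \<alpha> i - 1)) j)))"
    using integral_taylor_monomial_on[where S = UNIV]
    by (intro integral_taylor_sum integral_taylor_mult integral_taylor_const) simp_all
  moreover have "mpoly_eval c = (\<lambda>x. \<Sum>\<alpha>\<in>{\<alpha>. c \<alpha> \<noteq> 0}. c \<alpha> * (\<Prod>j\<in>UNIV. x j ^ \<alpha> j))"
    by (simp add: mpoly_eval_def fun_eq_iff)
  ultimately show ?thesis
    by (auto intro: integral_taylor_cong simp: mpoly_eval_pd[OF fin])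
qed

lemma integral_taylor_add_scaled:
  assumes "integral_taylor v h1 d1" "integral_taylor v h2 d2" "vge v c 0"
  shows "integral_taylor v (\<lambda>x. h1 x + c * h2 x) (\<lambda>i x. d1 i x + c * d2 i x)"
  using integral_taylor_cong[OF integral_taylor_add[OF assms(1)
        integral_taylor_mult[OF integral_taylor_const[OF assms(3)] assms(2)]]]
  by simp

section \<open>Balls and \<pi>-adic digits\<close>

lemma vball_mono: "k \<le> l \<Longrightarrow> vball v a l \<subseteq> vball v a k"
  by (auto simp: vball_def intro: vge_mono)

lemma vball_center: "a \<in> vball v a k"
  by (simp add: vball_def)

lemma vball_eq_of_mem:
  assumes "b \<in> vball v a k"
  shows "vball v b k = vball v a k"
proof -
  have ba: "vge v (b i - a i) k" for i using assms by (simp add: vball_def)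
  have "vge v (x i - b i) k \<longleftrightarrow> vge v (x i - a i) k" for x i
  proof
    assume "vge v (x i - b i) k"
    from vge_add[OF this ba[of i]] show "vge v (x i - a i) k" by simp
  next
    assume "vge v (x i - a i) k"
    from vge_diff[OF this ba[of i]] show "vge v (x i - b i) k" by simp
  qed
  then show ?thesis by (simp add: vball_def)
qed

lemma vball_disjoint: "vball v a k \<inter> vball v b k \<noteq> {} \<Longrightarrow> vball v a k = vball v b k"
  using vball_eq_of_mem by blast

lemma On_eq_vball: "On v = vball v (\<lambda>_. 0) 0"
  by (simp add: On_def vball_def ring_int_def)

lemma zero_in_On: "(\<lambda>_. 0) \<in> On v"
  by (simp add: On_def ring_int_def)

lemma subball_subset_vball:
  assumes "\<And>i. vge v (t i) 0"
  shows "vball v (\<lambda>i. a i + \<pi> powi m * t i) (m + 1) \<subseteq> vball v a m"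
proof
  fix x assume x: "x \<in> vball v (\<lambda>i. a i + \<pi> powi m * t i) (m + 1)"
  have "vge v ((x i - (a i + \<pi> powi m * t i)) + \<pi> powi m * t i) m" for i
  proof (rule vge_add)
    show "vge v (x i - (a i + \<pi> powi m * t i)) m"
      using x vge_mono[of _ "m + 1" m] by (simp add: vball_def)
    show "vge v (\<pi> powi m * t i) m"
      using assms by (simp add: vge_pi_powi_mult_iff)
  qed
  then show "x \<in> vball v a m" by (simp add: vball_def)
qed

lemma vball_eq_Union_subballs:
  fixes a :: "'n \<Rightarrow> 'a"
  assumes R: "residue_system v q R"
  shows "vball v a m = (\<Union>t\<in>{t. \<forall>i. t i \<in> R}. vball v (\<lambda>i. a i + \<pi> powi m * t i) (m + 1))"
proof
  show "vball v a m \<subseteq> (\<Union>t\<in>{t. \<forall>i. t i \<in> R}. vball v (\<lambda>i. a i + \<pi> powi m * t i) (m + 1))"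
  proof
    fix x assume x: "x \<in> vball v a m"
    have "\<exists>r\<in>R. vge v ((x i - a i) / \<pi> powi m - r) 1" for i
      using R vge_divide_pi_powi[of "x i - a i" m m] x by (simp add: residue_system_def vball_def)
    then obtain t where t: "\<And>i. t i \<in> R" "\<And>i. vge v ((x i - a i) / \<pi> powi m - t i) 1"
      by metis
    have "x i - (a i + \<pi> powi m * t i) = \<pi> powi m * ((x i - a i) / \<pi> powi m - t i)" for i
      using pi_powi_nonzero[of m] by (simp add: field_simps)
    then have "x \<in> vball v (\<lambda>i. a i + \<pi> powi m * t i) (m + 1)"
      using t(2) by (simp add: vball_def vge_pi_powi_mult_iff)
    then show "x \<in> (\<Union>t\<in>{t. \<forall>i. t i \<in> R}. vball v (\<lambda>i. a i + \<pi> powi m * t i) (m + 1))"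
      using t(1) by blast
  qed
  show "(\<Union>t\<in>{t. \<forall>i. t i \<in> R}. vball v (\<lambda>i. a i + \<pi> powi m * t i) (m + 1)) \<subseteq> vball v a m"
  proof (intro UN_least)
    fix t :: "'n \<Rightarrow> 'a" assume "t \<in> {t. \<forall>i. t i \<in> R}"
    then have "vge v (t i) 0" for i :: 'n using R by (simp add: residue_system_def)
    then show "vball v (\<lambda>i. a i + \<pi> powi m * t i) (m + 1) \<subseteq> vball v a m"
      by (rule subball_subset_vball)
  qed
qed

lemma subballs_disjoint:
  assumes R: "residue_system v q R" and t: "\<And>i. t i \<in> R" "\<And>i. t' i \<in> R" and "t \<noteq> t'"
  shows "vball v (\<lambda>i. a i + \<pi> powi m * t i) (m + 1) \<inter> vball v (\<lambda>i. a i + \<pi> powi m * t' i) (m + 1) = {}"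
proof (rule ccontr)
  assume "\<not> ?thesis"
  then obtain x where x: "x \<in> vball v (\<lambda>i. a i + \<pi> powi m * t i) (m + 1)"
      "x \<in> vball v (\<lambda>i. a i + \<pi> powi m * t' i) (m + 1)" by blast
  have "t i = t' i" for i
  proof -
    have "vge v (x i - (a i + \<pi> powi m * t' i)) (m + 1)" "vge v (x i - (a i + \<pi> powi m * t i)) (m + 1)"
      using x by (simp_all add: vball_def)
    then have "vge v ((x i - (a i + \<pi> powi m * t' i)) - (x i - (a i + \<pi> powi m * t i))) (m + 1)"
      by (rule vge_diff)
    moreover have "(x i - (a i + \<pi> powi m * t' i)) - (x i - (a i + \<pi> powi m * t i)) =
        \<pi> powi m * (t i - t' i)"
      by (simp add: algebra_simps)
    ultimately have "vge v (t i - t' i) 1" by (simp add: vge_pi_powi_mult_iff)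
    then show ?thesis using R t by (simp add: residue_system_def)
  qed
  then show False using \<open>t \<noteq> t'\<close> by auto
qed

lemma unit_congruence_unique_solution:
  assumes R: "residue_system v q R" and u: "u \<noteq> 0" "v u = 0" and c: "vge v c 0"
  shows "\<exists>!r. r \<in> R \<and> vge v (c + u * r) 1"
proof -
  have "vge v (- c * inverse u) 0"
    using vge_mult[OF iffD2[OF vge_uminus_iff c] vge_inverse_unit[OF u]] by simp
  then obtain r where r: "r \<in> R" "vge v (- c * inverse u - r) 1"
    using R by (auto simp: residue_system_def)
  have "c + u * r = u * (r - - c * inverse u)" using u(1) by (simp add: field_simps)
  then have sol: "vge v (c + u * r) 1"
    using r(2) u by (simp add: vge_unit_mult_iff vge_diff_commute)
  have "r' = r" if "r' \<in> R" "vge v (c + u * r') 1" for r'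
  proof -
    have "vge v ((c + u * r') - (c + u * r)) 1" using that(2) sol by (rule vge_diff)
    moreover have "(c + u * r') - (c + u * r) = u * (r' - r)" by (simp add: algebra_simps)
    ultimately have "vge v (r' - r) 1" using u by (simp add: vge_unit_mult_iff)
    then show ?thesis using R that(1) r(1) by (simp add: residue_system_def)
  qed
  then show ?thesis using r(1) sol by blast
qed

text \<open>The coordinate at which the coefficient is a unit is determined mod \<pi> by the others.\<close>

lemma card_linear_congruence_solutions:
  fixes w :: "'n::finite \<Rightarrow> 'a"
  assumes R: "residue_system v q R" and w: "min_valuation v w 0" and c: "vge v c 0"
  shows "card {t. (\<forall>i. t i \<in> R) \<and> vge v (c + (\<Sum>i\<in>UNIV. w i * t i)) 1} = q ^ (CARD('n) - 1)"
proof -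
  obtain iz where u: "w iz \<noteq> 0" "v (w iz) = 0" and wO: "\<And>i. vge v (w i) 0"
    using w by (auto simp: min_valuation_def)
  define A where "A = (UNIV - {iz} :: 'n set)"
  define G where "G = {t. (\<forall>i. t i \<in> R) \<and> vge v (c + (\<Sum>i\<in>UNIV. w i * t i)) 1}"
  define C where "C t = c + (\<Sum>i\<in>A. w i * t i)" for t
  have split: "c + (\<Sum>i\<in>UNIV. w i * t i) = C t + w iz * t iz" for t
    unfolding C_def A_def by (simp add: sum.remove[of UNIV iz])
  have C_cong: "(\<And>i. i \<in> A \<Longrightarrow> t i = t' i) \<Longrightarrow> C t = C t'" for t t'
    unfolding C_def by (intro arg_cong[where f = "\<lambda>x. c + x"] sum.cong) auto
  have "vge v (C t) 0" if "\<And>i. i \<in> A \<Longrightarrow> t i \<in> R" for t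
    unfolding C_def using c wO R that
    by (intro vge_add vge_sum) (auto simp: residue_system_def intro: vge_mult_le[of _ 0 _ 0])
  then have sol: "\<exists>!r. r \<in> R \<and> vge v (C t + w iz * r) 1" if "\<And>i. i \<in> A \<Longrightarrow> t i \<in> R" for t
    using unit_congruence_unique_solution[OF R u] that by blast
  have "bij_betw (\<lambda>t. restrict t A) G (Pi\<^sub>E A (\<lambda>_. R))"
  proof (rule bij_betw_imageI)
    show "inj_on (\<lambda>t. restrict t A) G"
    proof (rule inj_onI)
      fix t t' assume t: "t \<in> G" and t': "t' \<in> G" and "restrict t A = restrict t' A"
      then have agree: "i \<in> A \<Longrightarrow> t i = t' i" for i by (metis restrict_apply')
      have "t iz = t' iz"
        using sol[of t] t t' C_cong[OF agree] unfolding G_def split by auto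
      then show "t = t'" using agree unfolding A_def by (metis DiffI UNIV_I ext singletonD)
    qed
    show "(\<lambda>t. restrict t A) ` G = Pi\<^sub>E A (\<lambda>_. R)"
    proof
      show "(\<lambda>t. restrict t A) ` G \<subseteq> Pi\<^sub>E A (\<lambda>_. R)" unfolding G_def by auto
      show "Pi\<^sub>E A (\<lambda>_. R) \<subseteq> (\<lambda>t. restrict t A) ` G"
      proof
        fix s assume s: "s \<in> Pi\<^sub>E A (\<lambda>_. R)"
        then obtain r where r: "r \<in> R" "vge v (C s + w iz * r) 1" using sol[of s] by auto
        define t where "t = s(iz := r)"
        have "C t = C s" by (rule C_cong) (auto simp: t_def A_def)
        moreover have "t iz = r" by (simp add: t_def)
        ultimately have "t \<in> G" using s r unfolding G_def split by (auto simp: t_def A_def)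
        moreover have "restrict t A = s"
          using s PiE_arb[OF s] unfolding t_def A_def by (auto simp: fun_eq_iff)
        ultimately show "s \<in> (\<lambda>t. restrict t A) ` G" by force
      qed
    qed
  qed
  then have "card G = card (Pi\<^sub>E A (\<lambda>_. R))" by (rule bij_betw_same_card)
  also have "\<dots> = q ^ (CARD('n) - 1)"
    using R by (simp add: card_PiE residue_system_def A_def card_Diff_singleton)
  finally show ?thesis unfolding G_def .
qed

end

section \<open>Haar measure and level sets\<close>

lemma (in finite_measure) finite_if_disjoint_measure_ge:
  assumes F: "F \<subseteq> sets M" and disj: "disjoint F"
    and ge: "\<And>A. A \<in> F \<Longrightarrow> e \<le> measure M A" and e: "0 < e"
  shows "finite F"
proof (rule ccontr)
  assume "infinite F"
  obtain N :: nat where N: "measure M (space M) < real N * e"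
    using reals_Archimedean3[OF e] by blast
  obtain G where G: "finite G" "card G = N" "G \<subseteq> F"
    using infinite_arbitrarily_large[OF \<open>infinite F\<close>] by blast
  have "real N * e = (\<Sum>A\<in>G. e)" using G by simp
  also have "\<dots> \<le> (\<Sum>A\<in>G. measure M A)" using G ge by (intro sum_mono) auto
  also have "\<dots> = measure M (\<Union>A\<in>G. A)"
  proof (rule finite_measure_finite_Union[symmetric])
    show "disjoint_family_on (\<lambda>A. A) G"
      using disj G(3) unfolding disjoint_family_on_def disjoint_def by blast
  qed (use G F in auto)
  also have "\<dots> \<le> measure M (space M)"
    using G F sets.sets_into_space by (intro finite_measure_mono) blast+
  finally show False using N by linarith
qed

lemma (in finite_measure) measure_eq_divide_if_partition:
  assumes F: "finite F" "F \<subseteq> sets M" "disjoint F" and S: "S \<in> sets M" "S \<subseteq> \<Union>F"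
    and part: "\<And>A. A \<in> F \<Longrightarrow> measure M (A \<inter> S) = measure M A / c"
  shows "measure M S = measure M (\<Union>F) / c"
proof -
  have disj: "disjoint_family_on (\<lambda>A. A) F" "disjoint_family_on (\<lambda>A. A \<inter> S) F"
    using F(3) by (auto simp: disjoint_family_on_def disjoint_def)
  have "measure M S = measure M (\<Union>A\<in>F. A \<inter> S)"
    using S(2) by (intro arg_cong[where f = "measure M"]) blast
  also have "\<dots> = (\<Sum>A\<in>F. measure M (A \<inter> S))"
    using F S(1) disj(2) by (intro finite_measure_finite_Union) auto
  also have "\<dots> = (\<Sum>A\<in>F. measure M A) / c" by (simp add: part sum_divide_distrib)
  also have "(\<Sum>A\<in>F. measure M A) = measure M (\<Union>F)"
    using finite_measure_finite_Union[OF F(1) _ disj(1)] F(2) by auto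
  finally show ?thesis .
qed

lemma (in finite_measure) integral_suminf_indicator_geometric:
  fixes z :: complex
  assumes A: "\<And>n. A n \<in> sets M" and z: "norm z < 1"
  shows "(\<integral>x. (\<Sum>n. indicator (A n) x *\<^sub>R z ^ n) \<partial>M) = (\<Sum>n. measure M (A n) *\<^sub>R z ^ n)"
proof -
  define T where "T n x = indicator (A n) x *\<^sub>R z ^ n" for n x
  have int_A: "integrable M (indicator (A n) :: _ \<Rightarrow> real)" for n
    using A by (simp add: integrable_indicator_iff emeasure_finite less_top[symmetric])
  have int_T: "integrable M (T n)" for n
    unfolding T_def using int_A by (intro integrable_scaleR_left) auto
  have norm_T: "norm (T n x) \<le> norm z ^ n" for n x
    unfolding T_def by (simp add: indicator_def norm_power)
  have geometric: "summable (\<lambda>n. norm z ^ n)" using z by simp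
  have "summable (\<lambda>n. norm (T n x))" for x
    using norm_T by (intro summable_comparison_test[OF _ geometric]) simp
  then have summable_T: "AE x in M. summable (\<lambda>n. norm (T n x))" by simp
  have bound: "norm (\<integral>x. norm (T n x) \<partial>M) \<le> measure M (space M) * norm z ^ n" for n
  proof -
    have "(\<integral>x. norm (T n x) \<partial>M) \<le> (\<integral>x. norm z ^ n \<partial>M)"
      using int_T norm_T by (intro integral_mono) auto
    then show ?thesis by (simp add: integral_nonneg_AE)
  qed
  have summable_int: "summable (\<lambda>n. \<integral>x. norm (T n x) \<partial>M)"
    by (rule summable_comparison_test'[OF summable_mult[OF geometric]]) (rule bound)
  have "integral\<^sup>L M (T n) = measure M (A n) *\<^sub>R z ^ n" for n
  proof -
    have "integral\<^sup>L M (T n) = integral\<^sup>L M (indicator (A n) :: _ \<Rightarrow> real) *\<^sub>R z ^ n"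
      unfolding T_def using int_A by (intro integral_scaleR_left) auto
    then show ?thesis using A[of n] by (simp add: emeasure_finite)
  qed
  then show ?thesis
    using integral_suminf[OF int_T summable_T summable_int] unfolding T_def by simp
qed

lemma power_times_powr_neg:
  fixes q N :: nat and m :: int
  assumes "0 < q" "1 \<le> N"
  shows "real (q ^ (N - 1)) * real q powr (- real_of_int ((m + 1) * int N)) =
    real q powr (- real_of_int (m * int N)) / real q"
proof -
  have "real (q ^ (N - 1)) = real q powr (real N - 1)"
    using assms by (simp add: powr_realpow[symmetric] of_nat_diff)
  then have "real (q ^ (N - 1)) * real q powr (- real_of_int ((m + 1) * int N)) =
      real q powr (real N - 1) * real q powr (- real_of_int ((m + 1) * int N))"
    by (simp only:)
  also have "\<dots> = real q powr ((real N - 1) + - real_of_int ((m + 1) * int N))"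
    by (rule powr_add[symmetric])
  also have "(real N - 1) + - real_of_int ((m + 1) * int N) = - real_of_int (m * int N) - 1"
    by (simp add: algebra_simps)
  finally show ?thesis using assms by (simp add: powr_diff)
qed

locale padic_haar = padic_field v \<pi> q
  for v :: "'a::field_char_0 \<Rightarrow> int" and \<pi> q +
  fixes M :: "('n::finite \<Rightarrow> 'a) measure" and D :: "('n \<Rightarrow> 'a) set"
  assumes haar: "is_haar_On v q M" and D: "residue_preimage v D"
begin

lemma space_M: "space M = On v"
  using haar by (simp add: is_haar_On_def)

lemma vball_sets: "a \<in> On v \<Longrightarrow> 0 \<le> k \<Longrightarrow> vball v a k \<in> sets M"
  using haar unfolding is_haar_On_def by (auto intro: sigma_sets.Basic)

lemma emeasure_vball: "a \<in> On v \<Longrightarrow> 0 \<le> k \<Longrightarrow>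
    emeasure M (vball v a k) = ennreal (real q powr (- real_of_int (k * int CARD('n))))"
  using haar unfolding is_haar_On_def by auto

lemma finite_measure_M: "finite_measure M"
proof
  show "emeasure M (space M) \<noteq> \<infinity>"
    unfolding space_M On_eq_vball using emeasure_vball[OF zero_in_On, of 0] zero_in_On On_eq_vball by simp
qed

end

sublocale padic_haar \<subseteq> M: finite_measure M
  by (rule finite_measure_M)

context padic_haar
begin

lemma measure_vball: "a \<in> On v \<Longrightarrow> 0 \<le> k \<Longrightarrow>
    measure M (vball v a k) = real q powr (- real_of_int (k * int CARD('n)))"
  by (simp add: measure_def emeasure_vball)

lemma measure_vball_ge:
  assumes "a \<in> On v" "0 \<le> k" "k \<le> K"
  shows "real q powr (- real_of_int (K * int CARD('n))) \<le> measure M (vball v a k)"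
  using assms two_le_q by (simp add: measure_vball mult_right_mono)

lemma finite_disjoint_vball_family:
  assumes balls: "\<And>A. A \<in> F \<Longrightarrow> \<exists>a r. a \<in> On v \<and> 0 \<le> r \<and> r \<le> K \<and> A = vball v a r"
    and disj: "disjoint F"
  shows "F \<subseteq> sets M" and "finite F"
proof -
  show sets: "F \<subseteq> sets M" using balls vball_sets by blast
  show "finite F"
  proof (rule M.finite_if_disjoint_measure_ge[OF sets disj])
    fix A assume "A \<in> F"
    then obtain a r where "a \<in> On v" "0 \<le> r" "r \<le> K" "A = vball v a r" using balls by blast
    then show "real q powr (- real_of_int (K * int CARD('n))) \<le> measure M A"
      using measure_vball_ge by simp
  qed (use two_le_q in simp)
qed

lemma D_subset_On: "D \<subseteq> On v"
  using D by (simp add: residue_preimage_def)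

lemma vball_subset_D: "a \<in> D \<Longrightarrow> 1 \<le> k \<Longrightarrow> vball v a k \<subseteq> D"
  using D vball_mono[of 1 k a] by (auto simp: residue_preimage_def)

definition level_set :: "(('n \<Rightarrow> 'a) \<Rightarrow> 'a) \<Rightarrow> int \<Rightarrow> ('n \<Rightarrow> 'a) set" where
  "level_set h k = {x \<in> D. vge v (h x) k}"

lemma level_set_antimono: "k \<le> l \<Longrightarrow> level_set h l \<subseteq> level_set h k"
  unfolding level_set_def using vge_mono by blast

lemma level_set_zero: "integral_taylor v h dh \<Longrightarrow> level_set h 0 = D"
  using D_subset_On integral_taylor_vge_value by (auto simp: level_set_def)

lemma level_set_eq_if_close:
  assumes close: "\<And>x. x \<in> D \<Longrightarrow> vge v (h2 x - h1 x) \<beta>" and "k \<le> \<beta>"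
  shows "level_set h1 k = level_set h2 k"
proof -
  have "vge v (h1 x) k \<longleftrightarrow> vge v (h2 x) k" if "x \<in> D" for x
  proof
    have d: "vge v (h2 x - h1 x) k" using close[OF that] \<open>k \<le> \<beta>\<close> vge_mono by blast
    show "vge v (h2 x) k" if "vge v (h1 x) k" using vge_add[OF that d] by simp
    show "vge v (h1 x) k" if "vge v (h2 x) k" using vge_diff[OF that d] by simp
  qed
  then show ?thesis by (auto simp: level_set_def)
qed

text \<open>A level set is a union of balls of radius \<pi>^max(k,1), finitely many since they are
disjoint and of equal measure.\<close>

lemma level_set_sets:
  assumes h: "integral_taylor v h dh"
  shows "level_set h k \<in> sets M"
proof -
  define r where "r = max k 1"
  define F where "F = (\<lambda>x. vball v x r) ` level_set h k"
  have "level_set h k = \<Union>F"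
  proof
    show "level_set h k \<subseteq> \<Union>F" unfolding F_def using vball_center by blast
    show "\<Union>F \<subseteq> level_set h k"
    proof
      fix y assume "y \<in> \<Union>F"
      then obtain x where x: "x \<in> D" "vge v (h x) k" and y: "y \<in> vball v x r"
        unfolding F_def level_set_def by auto
      have "1 \<le> r" by (simp add: r_def)
      then have yD: "y \<in> D" using y vball_subset_D[OF x(1)] by blast
      have "vge v (y i - x i) r" for i using y by (simp add: vball_def)
      moreover have "x \<in> On v" "y \<in> On v" "0 \<le> r" using x(1) yD D_subset_On by (auto simp: r_def)
      ultimately have "vge v (h y - h x) r" using integral_taylor_diff[OF h] by blast
      then have "vge v ((h y - h x) + h x) k"
        using x(2) vge_mono[of _ r k] by (intro vge_add) (auto simp: r_def)
      then show "y \<in> level_set h k" using yD by (simp add: level_set_def)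
    qed
  qed
  moreover have "disjoint F" unfolding F_def disjoint_def using vball_disjoint by blast
  moreover have "\<exists>a r'. a \<in> On v \<and> 0 \<le> r' \<and> r' \<le> r \<and> A = vball v a r'" if A: "A \<in> F" for A
  proof -
    obtain x where "x \<in> D" "A = vball v x r" using A by (auto simp: F_def level_set_def)
    then show ?thesis using D_subset_On by (intro exI[of _ x] exI[of _ r]) (auto simp: r_def)
  qed
  ultimately show ?thesis using finite_disjoint_vball_family[of F r] sets.finite_Union by metis
qed

section \<open>Hensel's lemma for level sets\<close>

text \<open>On a subball of a + \<pi>^(k - l) O^n, Taylor expansion at a turns v(h x) \<ge> k + 1 into a
linear congruence in the \<pi>-adic digit t of x.\<close>

lemma level_set_Suc_iff_on_subball:
  assumes h: "integral_taylor v h dh" and a: "a \<in> D" and l: "0 \<le> l" "2 * l + 1 \<le> k"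
    and dl: "\<And>i. vge v (dh i a) l" and t: "\<And>i. vge v (t i) 0"
    and x: "x \<in> vball v (\<lambda>i. a i + \<pi> powi (k - l) * t i) (k - l + 1)"
  shows "x \<in> level_set h (k + 1) \<longleftrightarrow>
    vge v (h a / \<pi> powi k + (\<Sum>i\<in>UNIV. dh i a / \<pi> powi l * t i)) 1"
proof -
  define m where "m = k - l"
  define L where "L = h a / \<pi> powi k + (\<Sum>i\<in>UNIV. dh i a / \<pi> powi l * t i)"
  have m: "1 \<le> m" "k + 1 \<le> 2 * m" "k = m + l" using l by (auto simp: m_def)
  have xa: "x \<in> vball v a m" using subball_subset_vball[where t = t, OF t] x by (auto simp: m_def)
  have xD: "x \<in> D" using xa vball_subset_D[OF a m(1)] by blast
  have aOn: "a \<in> On v" and xOn: "x \<in> On v" using a xD D_subset_On by auto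
  have "vge v (x i - a i) m" for i using xa by (simp add: vball_def)
  then have "vge v (h x - h a - (\<Sum>i\<in>UNIV. dh i a * (x i - a i))) (2 * m)"
    using integral_taylor_remainder[OF h aOn xOn] m(1) by simp
  then have "vge v (h x - h a - (\<Sum>i\<in>UNIV. dh i a * (x i - a i))) (k + 1)"
    using vge_mono m(2) by blast
  moreover have "vge v (\<Sum>i\<in>UNIV. dh i a * (x i - a i - \<pi> powi m * t i)) (k + 1)"
  proof (rule vge_sum)
    fix i
    have "vge v (x i - a i - \<pi> powi m * t i) (m + 1)"
      using x by (simp add: vball_def m_def diff_diff_eq)
    then show "vge v (dh i a * (x i - a i - \<pi> powi m * t i)) (k + 1)"
      using vge_mult_le[OF dl[of i]] m(3) by simp
  qed
  ultimately have "vge v ((h x - h a - (\<Sum>i\<in>UNIV. dh i a * (x i - a i))) +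
      (\<Sum>i\<in>UNIV. dh i a * (x i - a i - \<pi> powi m * t i))) (k + 1)"
    by (rule vge_add)
  moreover have "(h x - h a - (\<Sum>i\<in>UNIV. dh i a * (x i - a i))) +
      (\<Sum>i\<in>UNIV. dh i a * (x i - a i - \<pi> powi m * t i)) = h x - \<pi> powi k * L"
  proof -
    have "\<pi> powi k * L = h a + (\<Sum>i\<in>UNIV. dh i a * (\<pi> powi m * t i))"
      using pi_powi_nonzero[of k] pi_powi_nonzero[of l] pi_nonzero unfolding L_def m(3)
      by (simp add: distrib_left sum_distrib_left power_int_add mult_ac)
    then show ?thesis by (simp add: algebra_simps sum_subtractf sum.distrib)
  qed
  ultimately have close: "vge v (h x - \<pi> powi k * L) (k + 1)" by simp
  have "vge v (h x) (k + 1) \<longleftrightarrow> vge v (\<pi> powi k * L) (k + 1)"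
  proof
    assume "vge v (h x) (k + 1)"
    from vge_diff[OF this close] show "vge v (\<pi> powi k * L) (k + 1)" by simp
  next
    assume "vge v (\<pi> powi k * L) (k + 1)"
    from vge_add[OF close this] show "vge v (h x) (k + 1)" by simp
  qed
  then show ?thesis using xD by (simp add: level_set_def vge_pi_powi_mult_iff L_def)
qed

lemma measure_Union_subballs:
  fixes a :: "'n \<Rightarrow> 'a"
  assumes R: "residue_system v q R" and a: "a \<in> On v" and m: "0 \<le> m"
    and G: "G \<subseteq> {t. \<forall>i. t i \<in> R}"
  shows "measure M (\<Union>t\<in>G. vball v (\<lambda>i. a i + \<pi> powi m * t i) (m + 1)) =
    real (card G) * real q powr (- real_of_int ((m + 1) * int CARD('n)))"
proof -
  define sub where "sub t = vball v (\<lambda>i. a i + \<pi> powi m * t i) (m + 1)" for t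
  have G_R: "\<And>i. t i \<in> R" if "t \<in> G" for t using that G by blast
  have center_On: "(\<lambda>i. a i + \<pi> powi m * t i) \<in> On v" if "t \<in> G" for t
    using On_vge[OF a] G_R[OF that] R m
    by (auto simp: On_def ring_int_def residue_system_def intro!: vge_add vge_mult_le[of _ m _ 0] vge_pi_powi)
  have "finite G"
  proof (rule finite_subset)
    show "G \<subseteq> Pi\<^sub>E (UNIV :: 'n set) (\<lambda>_. R)" using G by auto
    show "finite (Pi\<^sub>E (UNIV :: 'n set) (\<lambda>_. R))"
      using R by (intro finite_PiE) (auto simp: residue_system_def)
  qed
  moreover have "sub ` G \<subseteq> sets M"
    using center_On m by (auto simp: sub_def intro!: vball_sets)
  moreover have "disjoint_family_on sub G"
    unfolding disjoint_family_on_def sub_def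
    by (intro ballI impI subballs_disjoint[OF R]) (use G_R in auto)
  ultimately have "measure M (\<Union>t\<in>G. sub t) = (\<Sum>t\<in>G. measure M (sub t))"
    by (rule M.finite_measure_finite_Union)
  also have "\<dots> = (\<Sum>t\<in>G. real q powr (- real_of_int ((m + 1) * int CARD('n))))"
    unfolding sub_def using center_On m by (intro sum.cong refl measure_vball) auto
  finally show ?thesis unfolding sub_def by simp
qed

lemma measure_vball_inter_level_set_Suc:
  assumes h: "integral_taylor v h dh" and a: "a \<in> D" and ha: "vge v (h a) k"
    and l: "min_valuation v (\<lambda>i. dh i a) l" and k: "2 * l + 1 \<le> k"
  shows "measure M (vball v a (k - l) \<inter> level_set h (k + 1)) = measure M (vball v a (k - l)) / real q"
proof -
  obtain R where R: "residue_system v q R" by (rule residue_system_exists)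
  define m where "m = k - l"
  define G where "G = {t. (\<forall>i. t i \<in> R) \<and>
    vge v (h a / \<pi> powi k + (\<Sum>i\<in>UNIV. dh i a / \<pi> powi l * t i)) 1}"
  have aOn: "a \<in> On v" using a D_subset_On by blast
  have l0: "0 \<le> l" using min_valuation_nonneg[OF integral_taylor_vge_grad[OF h aOn] l] .
  have m: "1 \<le> m" using k l0 by (simp add: m_def)
  have "x \<in> level_set h (k + 1) \<longleftrightarrow> t \<in> G"
    if "\<forall>i. t i \<in> R" "x \<in> vball v (\<lambda>i. a i + \<pi> powi m * t i) (m + 1)" for x t
    using level_set_Suc_iff_on_subball[OF h a l0 k, of t] l R that
    by (simp add: G_def m_def min_valuation_def residue_system_def)
  then have eq: "vball v a m \<inter> level_set h (k + 1) =
      (\<Union>t\<in>G. vball v (\<lambda>i. a i + \<pi> powi m * t i) (m + 1))"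
    unfolding vball_eq_Union_subballs[OF R, of a m] G_def by blast
  have "G \<subseteq> {t. \<forall>i. t i \<in> R}" by (auto simp: G_def)
  then have "measure M (vball v a m \<inter> level_set h (k + 1)) =
      real (card G) * real q powr (- real_of_int ((m + 1) * int CARD('n)))"
    unfolding eq by (rule measure_Union_subballs[OF R aOn, rotated]) (use m in simp)
  also have "card G = q ^ (CARD('n) - 1)"
    unfolding G_def using vge_divide_pi_powi[OF ha, of k]
    by (intro card_linear_congruence_solutions[OF R min_valuation_divide_pi_powi[OF l]]) simp
  also have "real (q ^ (CARD('n) - 1)) * real q powr (- real_of_int ((m + 1) * int CARD('n))) =
      real q powr (- real_of_int (m * int CARD('n))) / real q"
    using two_le_q by (intro power_times_powr_neg) (auto simp: Suc_leI)
  also have "\<dots> = measure M (vball v a m) / real q"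
    using measure_vball[OF aOn] m by simp
  finally show ?thesis unfolding m_def .
qed

lemma vball_subset_level_set:
  assumes h: "integral_taylor v h dh" and a: "a \<in> level_set h k"
    and l: "min_valuation v (\<lambda>i. dh i a) l" and k: "2 * l + 1 \<le> k"
  shows "vball v a (k - l) \<subseteq> level_set h k"
proof
  fix x assume x: "x \<in> vball v a (k - l)"
  have aD: "a \<in> D" and ha: "vge v (h a) k" using a by (auto simp: level_set_def)
  have aOn: "a \<in> On v" using aD D_subset_On by blast
  have l0: "0 \<le> l" using min_valuation_nonneg[OF integral_taylor_vge_grad[OF h aOn] l] .
  have "1 \<le> k - l" using k l0 by simp
  then have xD: "x \<in> D" using x vball_subset_D[OF aD] by blast
  have xa: "vge v (x i - a i) (k - l)" for i using x by (simp add: vball_def)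
  have "vge v (h x - h a - (\<Sum>i\<in>UNIV. dh i a * (x i - a i))) (2 * (k - l))"
    using integral_taylor_remainder[OF h aOn _ _ xa] xD D_subset_On k l0 by auto
  then have "vge v (h x - h a - (\<Sum>i\<in>UNIV. dh i a * (x i - a i))) k"
    using vge_mono k l0 by fastforce
  moreover have "vge v (\<Sum>i\<in>UNIV. dh i a * (x i - a i)) k"
    using l xa by (intro vge_sum) (auto simp: min_valuation_def intro: vge_mult_le[of _ l _ "k - l"])
  ultimately have "vge v ((h x - h a - (\<Sum>i\<in>UNIV. dh i a * (x i - a i))) +
      (\<Sum>i\<in>UNIV. dh i a * (x i - a i)) + h a) k"
    using ha by (intro vge_add)
  then show "x \<in> level_set h k" using xD by (simp add: level_set_def)
qed

lemma min_valuation_grad_on_vball: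
  assumes h: "integral_taylor v h dh" and a: "a \<in> D"
    and l: "min_valuation v (\<lambda>i. dh i a) l" and k: "2 * l + 1 \<le> k"
    and x: "x \<in> vball v a (k - l)"
  shows "min_valuation v (\<lambda>i. dh i x) l"
proof -
  have aOn: "a \<in> On v" using a D_subset_On by blast
  have l0: "0 \<le> l" using min_valuation_nonneg[OF integral_taylor_vge_grad[OF h aOn] l] .
  have "1 \<le> k - l" using k l0 by simp
  then have xOn: "x \<in> On v" using x vball_subset_D[OF a] D_subset_On by blast
  have "vge v (dh i x - dh i a) (l + 1)" for i
  proof -
    have "vge v (dh i x - dh i a) (k - l)"
      using integral_taylor_grad_diff[OF h aOn xOn] x k l0 by (simp add: vball_def)
    then show ?thesis using vge_mono[of _ "k - l" "l + 1"] k by simp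
  qed
  then have "min_valuation v (\<lambda>i. dh i a + (dh i x - dh i a)) l"
    by (rule min_valuation_add[OF l])
  then show ?thesis by simp
qed

text \<open>For k \<ge> 2 l + 1 the level set {v(h) \<ge> k} is a disjoint union of balls a + \<pi>^(k - l(a)) O^n,
since l is constant on each of them.\<close>

lemma measure_level_set_Suc:
  assumes h: "integral_taylor v h dh"
    and l: "\<And>P. P \<in> D \<Longrightarrow> min_valuation v (\<lambda>i. dh i P) (l P)"
    and k: "\<And>P. P \<in> D \<Longrightarrow> 2 * l P + 1 \<le> k"
  shows "measure M (level_set h (k + 1)) = measure M (level_set h k) / real q"
proof -
  define B where "B a = vball v a (k - l a)" for a
  define F where "F = B ` level_set h k"
  have in_D: "a \<in> level_set h k \<Longrightarrow> a \<in> D" for a by (simp add: level_set_def)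
  have l0: "0 \<le> l a" if "a \<in> D" for a
    using that D_subset_On min_valuation_nonneg[OF integral_taylor_vge_grad[OF h] l] by blast
  have B_subset: "B a \<subseteq> level_set h k" if "a \<in> level_set h k" for a
    unfolding B_def using vball_subset_level_set[OF h that l k] in_D[OF that] by blast
  have B_eq: "B x = B a" if "a \<in> level_set h k" "x \<in> B a" for a x
  proof -
    have "min_valuation v (\<lambda>i. dh i x) (l a)"
      using min_valuation_grad_on_vball[OF h _ l k] that in_D unfolding B_def by blast
    then have "l x = l a"
      using l B_subset[OF that(1)] that(2) in_D min_valuation_unique by blast
    then show ?thesis using vball_eq_of_mem that(2) unfolding B_def by metis
  qed
  have disj: "disjoint F"
  proof (rule disjointI)
    fix A A' assume "A \<in> F" "A' \<in> F" "A \<noteq> A'"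
    then obtain a a' where a: "a \<in> level_set h k" "A = B a" and a': "a' \<in> level_set h k" "A' = B a'"
      by (auto simp: F_def)
    show "A \<inter> A' = {}"
    proof (rule ccontr)
      assume "A \<inter> A' \<noteq> {}"
      then obtain x where "x \<in> B a" "x \<in> B a'" using a a' by blast
      then have "B a = B a'" using B_eq[OF a(1)] B_eq[OF a'(1)] by metis
      then show False using \<open>A \<noteq> A'\<close> a a' by simp
    qed
  qed
  have "\<exists>a r. a \<in> On v \<and> 0 \<le> r \<and> r \<le> k \<and> A = vball v a r" if A: "A \<in> F" for A
  proof -
    obtain a where a: "a \<in> D" "A = B a" using A by (auto simp: F_def level_set_def)
    then show ?thesis using l0[OF a(1)] k[OF a(1)] D_subset_On unfolding B_def
      by (intro exI[of _ a] exI[of _ "k - l a"]) auto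
  qed
  note F = finite_disjoint_vball_family[OF this disj]
  moreover have "\<Union>F = level_set h k"
  proof
    show "\<Union>F \<subseteq> level_set h k" using B_subset by (auto simp: F_def)
    show "level_set h k \<subseteq> \<Union>F" using vball_center unfolding F_def B_def by blast
  qed
  moreover have "measure M (A \<inter> level_set h (k + 1)) = measure M A / real q" if "A \<in> F" for A
  proof -
    obtain a where a: "a \<in> D" "vge v (h a) k" "A = B a"
      using \<open>A \<in> F\<close> by (auto simp: F_def level_set_def)
    then show ?thesis
      using measure_vball_inter_level_set_Suc[OF h a(1,2) l[OF a(1)] k[OF a(1)]]
      by (simp add: B_def Int_commute)
  qed
  ultimately show ?thesis
    using M.measure_eq_divide_if_partition[OF F(2,1) disj level_set_sets[OF h]]
      level_set_antimono[of k "k + 1" h] by (metis less_add_one order_less_imp_le)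
qed

section \<open>The integral as a power series\<close>

text \<open>Here exp (- s ln q) = q^(-s); at most one term of the series is nonzero.\<close>

lemma abs_pow_sums_shells:
  assumes h: "integral_taylor v h dh"
  shows "(\<lambda>n. indicator (level_set h (int n) - level_set h (int n + 1)) x *\<^sub>R
      exp (- s * complex_of_real (ln (real q))) ^ n) sums (indicator D x *\<^sub>R abs_pow v q (h x) s)"
proof (cases "x \<in> D \<and> h x \<noteq> 0")
  case True
  then have "vge v (h x) 0" using integral_taylor_vge_value[OF h] D_subset_On by blast
  then obtain n where n: "v (h x) = int n" using True by (metis vge_def nonneg_int_cases)
  have "(\<lambda>m. indicator (level_set h (int m) - level_set h (int m + 1)) x *\<^sub>R
      exp (- s * complex_of_real (ln (real q))) ^ m) =
      (\<lambda>m. if m = n then exp (- s * complex_of_real (ln (real q))) ^ n else 0)"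
  proof -
    have "x \<in> level_set h (int m) - level_set h (int m + 1) \<longleftrightarrow> m = n" for m
      using True n by (auto simp: level_set_def vge_def)
    then show ?thesis by (auto simp: fun_eq_iff indicator_def)
  qed
  then show ?thesis
    using sums_single[of n "\<lambda>_. exp (- s * complex_of_real (ln (real q))) ^ n"] True
      abs_pow_eq_power[OF _ n] by simp
next
  case False
  then have "indicator (level_set h (int m) - level_set h (int m + 1)) x = (0 :: real)" for m
    by (auto simp: indicator_def level_set_def)
  then show ?thesis using False by (auto simp: abs_pow_def absK_def)
qed

lemma set_integral_abs_pow_eq_suminf:
  assumes h: "integral_taylor v h dh" and s: "0 < Re s"
  shows "(LINT x:D|M. abs_pow v q (h x) s) =
    (\<Sum>n. (measure M (level_set h (int n)) - measure M (level_set h (int n + 1))) *\<^sub>R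
      exp (- s * complex_of_real (ln (real q))) ^ n)"
proof -
  define z where "z = exp (- s * complex_of_real (ln (real q)))"
  define A where "A n = level_set h (int n) - level_set h (int n + 1)" for n
  have measure_A: "measure M (A n) = measure M (level_set h (int n)) - measure M (level_set h (int n + 1))"
    for n unfolding A_def using level_set_sets[OF h] level_set_antimono[of "int n" "int n + 1" h]
    by (intro M.finite_measure_Diff) auto
  have "(LINT x:D|M. abs_pow v q (h x) s) = (\<integral>x. (\<Sum>n. indicator (A n) x *\<^sub>R z ^ n) \<partial>M)"
    unfolding set_lebesgue_integral_def A_def z_def
    using sums_unique[OF abs_pow_sums_shells[OF h]] by simp
  also have "\<dots> = (\<Sum>n. measure M (A n) *\<^sub>R z ^ n)"
    using level_set_sets[OF h] two_le_q s unfolding A_def z_def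
    by (intro M.integral_suminf_indicator_geometric) auto
  finally show ?thesis unfolding measure_A z_def .
qed

lemma set_integral_abs_pow_eq_if_close:
  assumes h1: "integral_taylor v h1 d1" and h2: "integral_taylor v h2 d2"
    and l1: "\<And>P. P \<in> D \<Longrightarrow> min_valuation v (\<lambda>i. d1 i P) (l P)"
    and l2: "\<And>P. P \<in> D \<Longrightarrow> min_valuation v (\<lambda>i. d2 i P) (l P)"
    and \<beta>: "\<And>P. P \<in> D \<Longrightarrow> 2 * l P + 1 \<le> \<beta>"
    and close: "\<And>x. x \<in> D \<Longrightarrow> vge v (h2 x - h1 x) \<beta>"
    and s: "0 < Re s"
  shows "(LINT x:D|M. abs_pow v q (h1 x) s) = (LINT x:D|M. abs_pow v q (h2 x) s)"
proof -
  have "measure M (level_set h1 (int n)) = measure M (level_set h2 (int n))" for n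
  proof (induction n)
    case 0
    show ?case using level_set_zero[OF h1] level_set_zero[OF h2] by simp
  next
    case (Suc n)
    have Suc_eq: "int (Suc n) = int n + 1" by simp
    show ?case
    proof (cases "int n + 1 \<le> \<beta>")
      case True
      then show ?thesis unfolding Suc_eq using level_set_eq_if_close[OF close True] by (simp only:)
    next
      case False
      then have k: "\<And>P. P \<in> D \<Longrightarrow> 2 * l P + 1 \<le> int n" using \<beta> by force
      show ?thesis unfolding Suc_eq
        using measure_level_set_Suc[OF h1 l1 k] measure_level_set_Suc[OF h2 l2 k] Suc.IH by (simp only:)
    qed
  qed
  moreover have "measure M (level_set h1 (int n + 1)) = measure M (level_set h2 (int n + 1))" for n
    using calculation[of "Suc n"] by (simp only: of_nat_Suc add.commute[of "1 :: int"])
  ultimately show ?thesis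
    unfolding set_integral_abs_pow_eq_suminf[OF h1 s] set_integral_abs_pow_eq_suminf[OF h2 s] by simp
qed

lemma set_integral_abs_pow_add_pi_powi:
  assumes h: "integral_taylor v h dh" and g: "integral_taylor v g dg"
    and l: "\<And>P. P \<in> D \<Longrightarrow> min_valuation v (\<lambda>i. dh i P) (l P)"
    and \<beta>: "\<And>P. P \<in> D \<Longrightarrow> 2 * l P + 1 < \<beta>"
    and s: "0 < Re s"
  shows "(LINT x:D|M. abs_pow v q (h x) s) = (LINT x:D|M. abs_pow v q (h x + \<pi> powi \<beta> * g x) s)"
proof (cases "D = {}")
  case False
  have l0: "0 \<le> l P" if "P \<in> D" for P
    using min_valuation_nonneg[OF integral_taylor_vge_grad[OF h] l[OF that]] that D_subset_On by blast
  obtain P where "P \<in> D" using False by blast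
  then have "0 \<le> \<beta>" using \<beta> l0 by fastforce
  then have hg: "integral_taylor v (\<lambda>x. h x + \<pi> powi \<beta> * g x) (\<lambda>i x. dh i x + \<pi> powi \<beta> * dg i x)"
    by (intro integral_taylor_add_scaled h g vge_pi_powi)
  show ?thesis
  proof (rule set_integral_abs_pow_eq_if_close[OF h hg l _ _ _ s])
    fix P assume P: "P \<in> D"
    have "vge v (\<pi> powi \<beta> * dg i P) (l P + 1)" for i
    proof -
      have "vge v (dg i P) 0" using integral_taylor_vge_grad[OF g] P D_subset_On by blast
      then have "vge v (dg i P) (l P + 1 - \<beta>)" using vge_mono \<beta>[OF P] l0[OF P] by simp
      then show ?thesis by (simp add: vge_pi_powi_mult_iff)
    qed
    then show "min_valuation v (\<lambda>i. dh i P + \<pi> powi \<beta> * dg i P) (l P)"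
      by (rule min_valuation_add[OF l[OF P]])
    show "2 * l P + 1 \<le> \<beta>" using \<beta>[OF P] by simp
  next
    fix x assume "x \<in> D"
    then show "vge v (h x + \<pi> powi \<beta> * g x - h x) \<beta>"
      using integral_taylor_vge_value[OF g] D_subset_On by (simp add: subset_iff vge_pi_powi_mult_iff)
  qed
qed (simp add: set_lebesgue_integral_def)

end

lemma min_valuation_ell:
  assumes "\<not> critical_point f P"
  shows "min_valuation v (\<lambda>i. mpoly_eval (mpoly_pd i f) P) (ell v f P)"
proof -
  define d where "d i = mpoly_eval (mpoly_pd i f) P" for i
  define S where "S = {v (d i) |i. d i \<noteq> 0}"
  have ell: "ell v f P = Min S" unfolding S_def ell_def d_def ..
  have S: "finite S" "S \<noteq> {}"
    using assms by (auto simp: S_def critical_point_def d_def)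
  obtain i where "d i \<noteq> 0" "v (d i) = Min S" using Min_in[OF S] unfolding S_def by auto
  moreover have "vge v (d j) (Min S)" for j
  proof (cases "d j = 0")
    case False
    then have "v (d j) \<in> S" by (auto simp: S_def)
    then show ?thesis using Min_le[OF S(1)] by (simp add: vge_def)
  qed (simp add: vge_def)
  ultimately show ?thesis unfolding min_valuation_def ell d_def by blast
qed

lemma ell_bound_of_cfD:
  assumes "P \<in> D" and "2 * cfD v f D + 1 < ereal (real_of_int \<beta>)"
  shows "2 * ell v f P + 1 < \<beta>"
proof -
  have "ereal (real_of_int (ell v f P)) \<le> cfD v f D"
    unfolding cfD_def using assms(1) by (rule SUP_upper)
  then have "2 * ereal (real_of_int (ell v f P)) + 1 \<le> 2 * cfD v f D + 1"
    by (intro add_right_mono ereal_mult_left_mono) auto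
  then have "2 * ereal (real_of_int (ell v f P)) + 1 < ereal (real_of_int \<beta>)"
    using assms(2) by (rule le_less_trans)
  then have "2 * real_of_int (ell v f P) + 1 < real_of_int \<beta>" by simp
  then show ?thesis by linarith
qed

theorem mainTheorem3:
  fixes v :: "'a::field_char_0 \<Rightarrow> int" and \<pi> :: 'a and q :: nat
    and M :: "('n::finite \<Rightarrow> 'a) measure"
    and D :: "('n \<Rightarrow> 'a) set"
    and f g :: "('n \<Rightarrow> nat) \<Rightarrow> 'a"
    and \<beta> :: int and s :: complex
  assumes K: "is_padic_field v \<pi> q"
    and haar: "is_haar_On v q M"
    and D: "residue_preimage v D"
    and f: "is_poly_over (ring_int v) f"
    and nocrit: "\<forall>P\<in>D. \<not> critical_point f P"
    and g: "is_poly_over (ring_int v) g"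
    and beta: "2 * cfD v f D + 1 < ereal (real_of_int \<beta>)"
    and s: "Re s > 0"
  shows "(LINT x:D|M. abs_pow v q (mpoly_eval f x) s)
       = (LINT x:D|M. abs_pow v q (mpoly_eval f x + \<pi> powi \<beta> * mpoly_eval g x) s)"
proof -
  interpret padic_haar v \<pi> q M D
    by (rule padic_haar.intro[OF padic_field.intro[OF K] padic_haar_axioms.intro[OF haar D]])
  show ?thesis
  proof (rule set_integral_abs_pow_add_pi_powi[OF integral_taylor_mpoly[OF f] integral_taylor_mpoly[OF g] _ _ s])
    fix P assume "P \<in> D"
    then show "min_valuation v (\<lambda>i. mpoly_eval (mpoly_pd i f) P) (ell v f P)"
      and "2 * ell v f P + 1 < \<beta>"
      using min_valuation_ell nocrit ell_bound_of_cfD[OF _ beta] by auto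
  qed
qed

end
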